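(* Let $\mathfrak g=\mathfrak r_3$ (basis $\{e_1,e_2,e_3\}$, nonzero brackets $[e_1,e_2]=e_2+e_3$, $[e_1,e_3]=e_3$). Then the action of $\mathbb R^\times\mathrm{Aut}(\mathfrak g)$ on $\mathrm{GL}_3(\mathbb R)/\mathrm{O}(3)$ has no minimal orbits (with respect to the natural Riemannian metric).
   Context: Identify $\mathfrak g\cong\mathbb R^3$ via the basis. $\mathrm{GL}_3(\mathbb R)/\mathrm{O}(3)$ is identified with the set of inner products on $\mathfrak g$ via $g.\langle\cdot,\cdot\rangle=\langle g^{-1}\cdot,g^{-1}\cdot\rangle$. The natural Riemannian metric is the $\mathrm{GL}_3(\mathbb R)$-invariant metric corresponding to $\langle X,Y\rangle=\mathrm{tr}(XY)$ on $\mathrm{sym}(3)$ (reductive complement $\mathfrak{gl}_3=\mathfrak o(3)\oplus\mathrm{sym}(3)$). $\mathbb R^\times\mathrm{Aut}(\mathfrak g)=\{c\varphi:c\ne0,\ \varphi\in\mathrm{Aut}(\mathfrak g)\}\subset\mathrm{GL}_3(\mathbb R)$ acts by restriction. An orbit is minimal if its mean curvature vector vanishes identically. *)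

theory Defs
  imports "HOL-Analysis.Analysis"
begin

type_synonym mat3 = "real^3^3"

text \<open>g = R^3 with basis e1 = axis 1 1, e2 = axis 2 1, e3 = axis 3 1; bracket extended
  bilinearly and antisymmetrically from [e1,e2] = e2 + e3, [e1,e3] = e3, [e2,e3] = 0.\<close>
definition r3_bracket :: "real^3 \<Rightarrow> real^3 \<Rightarrow> real^3" where
  "r3_bracket x y =
     (let a = x$1 * y$2 - x$2 * y$1; b = x$1 * y$3 - x$3 * y$1
      in vector [0, a, a + b])"

definition r3_aut :: "mat3 \<Rightarrow> bool" where
  "r3_aut phi \<longleftrightarrow> invertible phi \<and>
     (\<forall>x y. phi *v r3_bracket x y = r3_bracket (phi *v x) (phi *v y))"

definition RxAut :: "mat3 set" where
  "RxAut = {c *\<^sub>R phi | c phi. c \<noteq> 0 \<and> r3_aut phi}"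

definition lie_alg :: "mat3 set \<Rightarrow> mat3 set" where
  "lie_alg G = {X. \<exists>\<gamma>. (\<forall>t. \<gamma> t \<in> G) \<and> \<gamma> 0 = mat 1 \<and> (\<gamma> has_vector_derivative X) (at 0)}"

section \<open>GL_3(R)/O(3) as the space of inner products (Gram matrices)\<close>

definition sym_mats :: "mat3 set" where
  "sym_mats = {A. transpose A = A}"

definition posdef :: "mat3 \<Rightarrow> bool" where
  "posdef P \<longleftrightarrow> transpose P = P \<and> (\<forall>x. x \<noteq> 0 \<longrightarrow> x \<bullet> (P *v x) > 0)"

text \<open>g.<.,.> = <g^{-1}.,g^{-1}.>: on Gram matrices P \<mapsto> g^{-T} P g^{-1}.\<close>
definition act :: "mat3 \<Rightarrow> mat3 \<Rightarrow> mat3" where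
  "act g P = transpose (matrix_inv g) ** P ** matrix_inv g"

text \<open>The GL_3-invariant metric induced by tr(XY) on sym(3): at the identity the curve
  exp(tX).I = exp(-2tX) has velocity -2X, so g_P(A,B) = (1/4) tr(P^{-1} A P^{-1} B).\<close>
definition metric :: "mat3 \<Rightarrow> mat3 \<Rightarrow> mat3 \<Rightarrow> real" where
  "metric P A B = (1/4) * trace (matrix_inv P ** A ** matrix_inv P ** B)"

definition dmetric :: "mat3 \<Rightarrow> mat3 \<Rightarrow> mat3 \<Rightarrow> mat3 \<Rightarrow> real" where
  "dmetric P A B C = deriv (\<lambda>t. metric (P + t *\<^sub>R A) B C) 0"

text \<open>Christoffel term of the Levi-Civita connection (Koszul formula, flat coordinates on
  sym(3)): nabla_A V = DV(A) + christ P A (V P).\<close>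
definition christ :: "mat3 \<Rightarrow> mat3 \<Rightarrow> mat3 \<Rightarrow> mat3" where
  "christ P A B = (THE Z. Z \<in> sym_mats \<and> (\<forall>C\<in>sym_mats.
      metric P Z C = (1/2) * (dmetric P A B C + dmetric P B A C - dmetric P C A B)))"

definition cov_deriv :: "(mat3 \<Rightarrow> mat3) \<Rightarrow> mat3 \<Rightarrow> mat3 \<Rightarrow> mat3" where
  "cov_deriv V P A = (THE D. (V has_derivative D) (at P)) A + christ P A (V P)"

text \<open>Fundamental (action) vector field of X in gl_3: d/dt|_0 exp(tX).Q.\<close>
definition fund :: "mat3 \<Rightarrow> mat3 \<Rightarrow> mat3" where
  "fund X Q = - (transpose X ** Q + Q ** X)"

definition orbit :: "mat3 set \<Rightarrow> mat3 \<Rightarrow> mat3 set" where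
  "orbit G P = {act g P | g. g \<in> G}"

definition orbit_tangent :: "mat3 set \<Rightarrow> mat3 \<Rightarrow> mat3 set" where
  "orbit_tangent G Q = {fund X Q | X. X \<in> lie_alg G}"

definition normal_proj :: "mat3 \<Rightarrow> mat3 set \<Rightarrow> mat3 \<Rightarrow> mat3" where
  "normal_proj P T N = (THE n. N - n \<in> T \<and> (\<forall>v\<in>T. metric P n v = 0))"

text \<open>Mean curvature vector of the orbit G.Q at Q vanishes: for every orthonormal basis
  X_1^*(Q),...,X_k^*(Q) of the tangent space (X_i in the Lie algebra; the fundamental fields
  are tangent extensions), the normal part of sum_i nabla_{X_i^*} X_i^* is zero.\<close>
definition mean_curv_zero :: "mat3 set \<Rightarrow> mat3 \<Rightarrow> bool" where
  "mean_curv_zero G Q \<longleftrightarrow>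
     (\<forall>xs. set xs \<subseteq> lie_alg G
        \<and> span (set (map (\<lambda>X. fund X Q) xs)) = orbit_tangent G Q
        \<and> (\<forall>i<length xs. \<forall>j<length xs.
             metric Q (fund (xs!i) Q) (fund (xs!j) Q) = (if i = j then 1 else 0))
        \<longrightarrow> normal_proj Q (orbit_tangent G Q)
              (\<Sum>X\<leftarrow>xs. cov_deriv (fund X) Q (fund X Q)) = 0)"

definition minimal_orbit :: "mat3 set \<Rightarrow> mat3 \<Rightarrow> bool" where
  "minimal_orbit G P \<longleftrightarrow> (\<forall>Q\<in>orbit G P. mean_curv_zero G Q)"

end

theory Submission
  imports Defs
begin

text \<open>Every inner product can be brought to diagonal form diag(a, b, e) by a unipotent lower
  triangular matrix, and these are automorphisms of r_3; so every orbit meets the diagonal inner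
  products and it suffices to exhibit a nonzero mean curvature vector there. The Lie algebra of
  R^x Aut(r_3) consists of the lower triangular matrices with equal (2,2) and (3,3) entries. At
  diag(a, b, e) the fundamental fields of E11, (E22 + E33)/sqrt 2 and suitable multiples of E21,
  E31, E32 are orthonormal, and since they are linear vector fields their covariant derivatives
  only involve the Christoffel term, which comes from the derivative -P^-1 A P^-1 of the matrix
  inverse. Summing gives diag(4a, 0, -4e), whose normal component diag(0, 2b, -2e) is nonzero.\<close>

section \<open>Matrix inverse, trace and transpose\<close>

lemma matrix_inv_unique:
  fixes A B :: "'a::field^'n^'n"
  assumes "A ** B = mat 1"
  shows "matrix_inv A = B"
proof -
  have BA: "B ** A = mat 1" using assms matrix_left_right_inverse by blast
  have "A ** matrix_inv A = mat 1 \<and> matrix_inv A ** A = mat 1"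
    unfolding matrix_inv_def using assms BA by (rule someI[of _ B, OF conjI])
  then have "matrix_inv A = matrix_inv A ** (A ** B)" using assms by simp
  also have "\<dots> = B" using \<open>_ \<and> _\<close> by (simp add: matrix_mul_assoc)
  finally show ?thesis .
qed

lemma matrix_inv_right:
  fixes A :: "'a::field^'n^'n"
  assumes "invertible A"
  shows "A ** matrix_inv A = mat 1"
  using assms matrix_inv_unique unfolding invertible_right_inverse by metis

lemma matrix_inv_left:
  fixes A :: "'a::field^'n^'n"
  assumes "invertible A"
  shows "matrix_inv A ** A = mat 1"
  using matrix_inv_right[OF assms] matrix_left_right_inverse by blast

lemma transpose_matrix_inv:
  fixes A :: "'a::field^'n^'n"
  assumes "invertible A"
  shows "transpose (matrix_inv A) = matrix_inv (transpose A)"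
  using matrix_inv_left[OF assms]
  by (metis matrix_inv_unique matrix_transpose_mul transpose_mat)

lemma matrix_inv_cramer:
  fixes A :: "'a::field^'n^'n"
  assumes "det A \<noteq> 0"
  shows "matrix_inv A $ i $ j = det (\<chi> r c. if c = i then axis j 1 $ r else A $ r $ c) / det A"
proof -
  have "A *v (matrix_inv A *v axis j 1) = axis j 1"
    using assms by (simp add: matrix_vector_mul_assoc matrix_inv_right invertible_det_nz)
  then have "matrix_inv A *v axis j 1 = (\<chi> k. det (\<chi> r c. if c = k then axis j 1 $ r else A $ r $ c) / det A)"
    using cramer[OF assms] by blast
  moreover have "(matrix_inv A *v axis j 1) $ i = matrix_inv A $ i $ j"
    by (simp add: matrix_vector_mult_def axis_def if_distrib cong: if_cong)
  ultimately show ?thesis by simp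
qed

lemma tendsto_det:
  fixes X :: "'a \<Rightarrow> real^'n^'n"
  assumes "(X \<longlongrightarrow> A) F"
  shows "((\<lambda>t. det (X t)) \<longlongrightarrow> det A) F"
  unfolding det_def by (intro tendsto_intros tendsto_vec_nth assms)

lemma tendsto_matrix_inv:
  fixes X :: "'a \<Rightarrow> real^'n^'n"
  assumes X: "(X \<longlongrightarrow> A) F" and A: "invertible A"
  shows "((\<lambda>t. matrix_inv (X t)) \<longlongrightarrow> matrix_inv A) F"
proof (intro vec_tendstoI)
  fix i j
  have dA: "det A \<noteq> 0" using A invertible_det_nz by blast
  have "eventually (\<lambda>t. det (X t) \<noteq> 0) F"
    using tendsto_imp_eventually_ne[OF tendsto_det[OF X] dA] .
  then have "eventually (\<lambda>t. det (\<chi> r c. if c = i then axis j 1 $ r else X t $ r $ c) / det (X t)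
      = matrix_inv (X t) $ i $ j) F"
    by eventually_elim (simp add: matrix_inv_cramer)
  moreover have "((\<lambda>t. det (\<chi> r c. if c = i then axis j 1 $ r else X t $ r $ c) / det (X t))
      \<longlongrightarrow> matrix_inv A $ i $ j) F"
  proof -
    have "((\<lambda>t. if c = i then axis j 1 $ r else X t $ r $ c)
        \<longlongrightarrow> (if c = i then axis j 1 $ r else A $ r $ c)) F" for r c
      by (cases "c = i") (simp_all add: tendsto_vec_nth X)
    then show ?thesis
      unfolding matrix_inv_cramer[OF dA] by (intro tendsto_intros tendsto_det tendsto_vec_lambda X dA)
  qed
  ultimately show "((\<lambda>t. matrix_inv (X t) $ i $ j) \<longlongrightarrow> matrix_inv A $ i $ j) F"
    by (blast intro: Lim_transform_eventually)
qed

lemma bilinear_matrix_mult: "bilinear ((**) :: real^'n^'m \<Rightarrow> real^'p^'n \<Rightarrow> real^'p^'m)"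
  unfolding bilinear_def
  by (auto intro!: linearI simp: matrix_add_ldistrib matrix_scalar_ac scalar_matrix_assoc[symmetric])
     (simp_all add: vec_eq_iff matrix_matrix_mult_def sum.distrib algebra_simps)

lemma bounded_bilinear_matrix_mult: "bounded_bilinear ((**) :: real^'n^'m \<Rightarrow> real^'p^'n \<Rightarrow> real^'p^'m)"
  using bilinear_matrix_mult bilinear_conv_bounded_bilinear by blast

lemmas matrix_mult_diff_left = bilinear_lsub[OF bilinear_matrix_mult]
  and matrix_mult_diff_right = bilinear_rsub[OF bilinear_matrix_mult]
  and matrix_mult_add_left = bilinear_ladd[OF bilinear_matrix_mult]
  and matrix_mult_add_right = bilinear_radd[OF bilinear_matrix_mult]
  and matrix_mult_scaleR_left = bilinear_lmul[OF bilinear_matrix_mult]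
  and matrix_mult_scaleR_right = bilinear_rmul[OF bilinear_matrix_mult]
  and matrix_mult_minus_left = bilinear_lneg[OF bilinear_matrix_mult]
  and matrix_mult_minus_right = bilinear_rneg[OF bilinear_matrix_mult]

lemma matrix_inv_diff:
  fixes A B :: "real^'n^'n"
  assumes "invertible A" "invertible B"
  shows "matrix_inv B - matrix_inv A = matrix_inv B ** (A - B) ** matrix_inv A"
  using assms by (simp add: matrix_mult_diff_left matrix_mult_diff_right matrix_mul_assoc[symmetric]
      matrix_inv_right) (simp add: matrix_mul_assoc matrix_inv_left)

lemma has_vector_derivative_matrix_inv_line:
  fixes P A :: "real^'n^'n"
  assumes P: "invertible P"
  shows "((\<lambda>t. matrix_inv (P + t *\<^sub>R A)) has_vector_derivative
           - (matrix_inv P ** A ** matrix_inv P)) (at 0)"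
proof -
  define n where "n t = matrix_inv (P + t *\<^sub>R A)" for t
  define N where "N = matrix_inv P"
  have line: "((\<lambda>t. P + t *\<^sub>R A) \<longlongrightarrow> P) (at 0)"
    by (rule tendsto_eq_intros | simp)+
  have "eventually (\<lambda>t. det (P + t *\<^sub>R A) \<noteq> 0) (at 0)"
    using tendsto_imp_eventually_ne[OF tendsto_det[OF line]] P invertible_det_nz by blast
  moreover have "eventually (\<lambda>t. t \<noteq> 0) (at 0)"
    by (simp add: eventually_at_filter)
  ultimately have "eventually (\<lambda>t. norm (N ** A ** N - n t ** A ** N)
      = norm (n t - n 0 - (t - 0) *\<^sub>R - (N ** A ** N)) / norm (t - 0)) (at 0)"
  proof eventually_elim
    case (elim t)
    then have "invertible (P + t *\<^sub>R A)" by (simp add: invertible_det_nz)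
    then have "n t - n 0 = n t ** (- (t *\<^sub>R A)) ** N"
      using matrix_inv_diff[OF P] by (simp add: n_def N_def)
    then have "n t - n 0 - (t - 0) *\<^sub>R - (N ** A ** N) = t *\<^sub>R (N ** A ** N - n t ** A ** N)"
      by (simp add: matrix_mult_minus_left matrix_mult_minus_right matrix_mult_scaleR_left
          matrix_mult_scaleR_right algebra_simps)
    then show ?case using elim by simp
  qed
  moreover have "((\<lambda>t. norm (N ** A ** N - n t ** A ** N)) \<longlongrightarrow> 0) (at 0)"
  proof -
    have "(n \<longlongrightarrow> N) (at 0)"
      unfolding n_def N_def by (rule tendsto_matrix_inv[OF line P])
    then have "((\<lambda>t. n t ** A ** N) \<longlongrightarrow> N ** A ** N) (at 0)"
      by (intro bounded_bilinear.tendsto[OF bounded_bilinear_matrix_mult] tendsto_const)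
    then show ?thesis
      using tendsto_norm_zero[OF LIM_zero] by (simp add: norm_minus_commute)
  qed
  ultimately have "(n has_vector_derivative - (N ** A ** N)) (at 0)"
    unfolding has_vector_derivative_def has_derivative_iff_norm
    by (blast intro: Lim_transform_eventually bounded_linear_scaleR_left)
  then show ?thesis unfolding n_def N_def .
qed

lemma trace_uminus: "trace (- (A::'a::comm_ring_1^'n^'n)) = - trace A"
  by (simp add: trace_def sum_negf)

lemma trace_scale: "trace (c *\<^sub>R (A::real^'n^'n)) = c * trace A"
  by (simp add: trace_def sum_distrib_left)

lemma bounded_linear_trace: "bounded_linear (trace :: real^'n^'n \<Rightarrow> real)"
  unfolding trace_def
  by (intro bounded_linear_sum bounded_linear_compose[OF bounded_linear_vec_nth bounded_linear_vec_nth])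

lemma transpose_add: "transpose (A + B) = transpose A + transpose (B::'a::semiring_1^'n^'m)"
  by (simp add: vec_eq_iff transpose_def)

lemma transpose_diff: "transpose (A - B) = transpose A - transpose (B::'a::ring_1^'n^'m)"
  by (simp add: vec_eq_iff transpose_def)

lemma transpose_uminus: "transpose (- A) = - transpose (A::'a::ring_1^'n^'m)"
  by (simp add: vec_eq_iff transpose_def)

section \<open>The invariant metric and its Levi-Civita connection\<close>

lemma dmetric_eq:
  assumes P: "invertible P"
  shows "dmetric P A B C = -(1/4) * (trace (matrix_inv P ** A ** matrix_inv P ** B ** matrix_inv P ** C)
            + trace (matrix_inv P ** B ** matrix_inv P ** A ** matrix_inv P ** C))"
proof -
  define N where "N = matrix_inv P"
  define n where "n t = matrix_inv (P + t *\<^sub>R A)" for t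
  note mult = bounded_bilinear.has_vector_derivative[OF bounded_bilinear_matrix_mult]
  have n: "(n has_vector_derivative - (N ** A ** N)) (at 0)" and n0: "n 0 = N"
    unfolding n_def N_def using has_vector_derivative_matrix_inv_line[OF P] by simp_all
  have nX: "((\<lambda>t. n t ** X) has_vector_derivative - (N ** A ** N) ** X) (at 0)" for X
    using mult[OF n has_vector_derivative_const, of X] by simp
  have "((\<lambda>t. (n t ** B) ** (n t ** C)) has_vector_derivative
      (N ** B) ** (- (N ** A ** N) ** C) + (- (N ** A ** N) ** B) ** (N ** C)) (at 0)"
    using mult[OF nX nX] by (simp add: n0)
  then have "((\<lambda>t. (1/4) * trace ((n t ** B) ** (n t ** C))) has_real_derivative
      (1/4) * trace ((N ** B) ** (- (N ** A ** N) ** C) + (- (N ** A ** N) ** B) ** (N ** C))) (at 0)"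
    unfolding has_real_derivative_iff_has_vector_derivative
    by (intro has_vector_derivative_mult_right bounded_linear.has_vector_derivative[OF bounded_linear_trace])
  then have "deriv (\<lambda>t. (1/4) * trace ((n t ** B) ** (n t ** C))) 0
      = (1/4) * trace ((N ** B) ** (- (N ** A ** N) ** C) + (- (N ** A ** N) ** B) ** (N ** C))"
    by (rule DERIV_imp_deriv)
  then show ?thesis
    unfolding dmetric_def metric_def n_def N_def
    by (simp add: matrix_mul_assoc trace_add trace_sub trace_uminus
        matrix_mult_minus_left matrix_mult_minus_right add.commute)
      (simp add: field_simps)
qed

lemma subspace_sym_mats: "subspace sym_mats"
  unfolding subspace_def sym_mats_def by (simp add: vec_eq_iff transpose_def)

text \<open>Needed for christ and normal_proj, which are defined by THE, to denote the intended values;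
  it is only established at diagonal inner products, which suffices.\<close>
definition metric_definite :: "mat3 \<Rightarrow> bool" where
  "metric_definite P \<longleftrightarrow> (\<forall>D\<in>sym_mats. metric P D D = 0 \<longrightarrow> D = 0)"

lemma metric_diff_left: "metric P (X - Y) C = metric P X C - metric P Y C"
  unfolding metric_def by (simp add: matrix_mult_diff_left matrix_mult_diff_right trace_sub algebra_simps)

lemma metric_definite_cancel:
  assumes "metric_definite P" "Z - Z' \<in> sym_mats" "metric P Z (Z - Z') = metric P Z' (Z - Z')"
  shows "Z = Z'"
proof -
  have "metric P (Z - Z') (Z - Z') = 0" using assms(3) by (simp add: metric_diff_left)
  then show ?thesis using assms(1,2) unfolding metric_definite_def by force
qed

lemma christ_eq:
  assumes P: "invertible P" "transpose P = P" "metric_definite P"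
    and A: "transpose A = A" and B: "transpose B = B"
  shows "christ P A B = - (1/2) *\<^sub>R (A ** matrix_inv P ** B + B ** matrix_inv P ** A)"
proof -
  define N where "N = matrix_inv P"
  have N: "transpose N = N" unfolding N_def using P by (simp add: transpose_matrix_inv)
  define Koszul where "Koszul Z \<longleftrightarrow> Z \<in> sym_mats \<and> (\<forall>C\<in>sym_mats.
      metric P Z C = (1/2) * (dmetric P A B C + dmetric P B A C - dmetric P C A B))" for Z
  define Z where "Z = - (1/2) *\<^sub>R (A ** N ** B + B ** N ** A)"
  have "Koszul Z"
    unfolding Koszul_def
  proof (intro conjI ballI)
    show "Z \<in> sym_mats" unfolding sym_mats_def Z_def
      by (simp add: transpose_uminus transpose_scalar transpose_add matrix_transpose_mul A B N
          matrix_mul_assoc add.commute)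
    fix C :: mat3
    have "trace (N ** C ** N ** A ** N ** B) = trace (N ** A ** N ** B ** N ** C)"
      using trace_mul_sym[of "N ** C" "N ** A ** N ** B"] by (simp add: matrix_mul_assoc)
    moreover have "trace (N ** A ** N ** C ** N ** B) = trace (N ** B ** N ** A ** N ** C)"
      using trace_mul_sym[of "N ** A ** N ** C" "N ** B"] by (simp add: matrix_mul_assoc)
    ultimately show "metric P Z C = (1/2) * (dmetric P A B C + dmetric P B A C - dmetric P C A B)"
      unfolding dmetric_eq[OF P(1)] N_def[symmetric] metric_def Z_def
      by (simp add: matrix_mult_add_left matrix_mult_add_right matrix_mult_diff_left
          matrix_mult_diff_right matrix_mult_minus_left matrix_mult_minus_right
          matrix_mult_scaleR_left matrix_mult_scaleR_right matrix_mul_assoc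
          trace_add trace_sub trace_uminus trace_scale algebra_simps)
  qed
  moreover have "Z' = Z" if "Koszul Z'" for Z'
  proof (rule metric_definite_cancel[OF P(3)])
    show D: "Z' - Z \<in> sym_mats"
      using \<open>Koszul Z\<close> that subspace_diff[OF subspace_sym_mats] unfolding Koszul_def by blast
    show "metric P Z' (Z' - Z) = metric P Z (Z' - Z)"
      using \<open>Koszul Z\<close> that unfolding Koszul_def by (auto dest!: bspec[OF _ D])
  qed
  ultimately have "christ P A B = Z"
    unfolding christ_def Koszul_def[symmetric] by (rule the_equality)
  then show ?thesis unfolding Z_def N_def .
qed

lemma cov_deriv_linear:
  assumes "linear V"
  shows "cov_deriv V Q W = V W + christ Q W (V Q)"
proof -
  have "(V has_derivative V) (at Q)"
    using assms linear_conv_bounded_linear bounded_linear_imp_has_derivative by blast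
  then have "(THE D. (V has_derivative D) (at Q)) = V"
    using has_derivative_unique by blast
  then show ?thesis unfolding cov_deriv_def by simp
qed

lemma normal_proj_eqI:
  assumes P: "metric_definite P" and T: "subspace T" "T \<subseteq> sym_mats"
    and n: "S - n \<in> T" "\<And>v. v \<in> T \<Longrightarrow> metric P n v = 0"
  shows "normal_proj P T S = n"
  unfolding normal_proj_def
proof (rule the_equality)
  show "S - n \<in> T \<and> (\<forall>v\<in>T. metric P n v = 0)" using n by blast
  fix n' assume n': "S - n' \<in> T \<and> (\<forall>v\<in>T. metric P n' v = 0)"
  have "n' - n = (S - n) - (S - n')" by simp
  then have D: "n' - n \<in> T" using n(1) n' subspace_diff[OF T(1)] by metis
  show "n' = n"
    using D n' n(2)[OF D] T(2) by (intro metric_definite_cancel[OF P]) auto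
qed

lemma linear_fund: "linear (fund X)"
  by (rule linearI) (simp_all add: fund_def matrix_mult_add_left matrix_mult_add_right
      matrix_mult_scaleR_left matrix_mult_scaleR_right algebra_simps)

lemma linear_fund_left: "linear (\<lambda>X. fund X Q)"
  by (rule linearI) (simp_all add: fund_def transpose_add transpose_scalar matrix_mult_add_left
      matrix_mult_add_right matrix_mult_scaleR_left matrix_mult_scaleR_right algebra_simps)

lemma fund_symmetric: "transpose Q = Q \<Longrightarrow> transpose (fund X Q) = fund X Q"
  unfolding fund_def by (simp add: transpose_uminus transpose_add transpose_diff matrix_transpose_mul)

lemma cov_deriv_fund_self:
  assumes Q: "invertible Q" "transpose Q = Q" "metric_definite Q"
  shows "cov_deriv (fund X) Q (fund X Q) = fund X (fund X Q) - fund X Q ** matrix_inv Q ** fund X Q"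
  using christ_eq[OF Q fund_symmetric fund_symmetric] Q(2)
  by (simp add: cov_deriv_linear[OF linear_fund] scaleR_2[symmetric])

section \<open>Explicit 3 by 3 matrices\<close>

definition m3 :: "real \<Rightarrow> real \<Rightarrow> real \<Rightarrow> real \<Rightarrow> real \<Rightarrow> real \<Rightarrow> real \<Rightarrow> real \<Rightarrow> real \<Rightarrow> mat3" where
  "m3 a11 a12 a13 a21 a22 a23 a31 a32 a33 = (\<chi> i j.
     if i = 1 then (if j = 1 then a11 else if j = 2 then a12 else a13)
     else if i = 2 then (if j = 1 then a21 else if j = 2 then a22 else a23)
     else (if j = 1 then a31 else if j = 2 then a32 else a33))"

lemma m3_nth [simp]:
  "m3 a11 a12 a13 a21 a22 a23 a31 a32 a33 $ 1 $ 1 = a11"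
  "m3 a11 a12 a13 a21 a22 a23 a31 a32 a33 $ 1 $ 2 = a12"
  "m3 a11 a12 a13 a21 a22 a23 a31 a32 a33 $ 1 $ 3 = a13"
  "m3 a11 a12 a13 a21 a22 a23 a31 a32 a33 $ 2 $ 1 = a21"
  "m3 a11 a12 a13 a21 a22 a23 a31 a32 a33 $ 2 $ 2 = a22"
  "m3 a11 a12 a13 a21 a22 a23 a31 a32 a33 $ 2 $ 3 = a23"
  "m3 a11 a12 a13 a21 a22 a23 a31 a32 a33 $ 3 $ 1 = a31"
  "m3 a11 a12 a13 a21 a22 a23 a31 a32 a33 $ 3 $ 2 = a32"
  "m3 a11 a12 a13 a21 a22 a23 a31 a32 a33 $ 3 $ 3 = a33"
  by (simp_all add: m3_def)

lemma m3_eta: "(M::mat3) = m3 (M$1$1) (M$1$2) (M$1$3) (M$2$1) (M$2$2) (M$2$3) (M$3$1) (M$3$2) (M$3$3)"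
  by (simp add: vec_eq_iff forall_3)

lemma m3_eq_iff [simp]: "m3 a11 a12 a13 a21 a22 a23 a31 a32 a33 = m3 b11 b12 b13 b21 b22 b23 b31 b32 b33 \<longleftrightarrow>
   a11 = b11 \<and> a12 = b12 \<and> a13 = b13 \<and> a21 = b21 \<and> a22 = b22 \<and> a23 = b23 \<and> a31 = b31 \<and> a32 = b32 \<and> a33 = b33"
  by (simp add: vec_eq_iff forall_3)

lemma m3_mult [simp]: "m3 a11 a12 a13 a21 a22 a23 a31 a32 a33 ** m3 b11 b12 b13 b21 b22 b23 b31 b32 b33 =
  m3 (a11*b11+a12*b21+a13*b31) (a11*b12+a12*b22+a13*b32) (a11*b13+a12*b23+a13*b33)
     (a21*b11+a22*b21+a23*b31) (a21*b12+a22*b22+a23*b32) (a21*b13+a22*b23+a23*b33)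
     (a31*b11+a32*b21+a33*b31) (a31*b12+a32*b22+a33*b32) (a31*b13+a32*b23+a33*b33)"
  by (simp add: vec_eq_iff forall_3 matrix_matrix_mult_def sum_3)

lemma m3_add [simp]: "m3 a11 a12 a13 a21 a22 a23 a31 a32 a33 + m3 b11 b12 b13 b21 b22 b23 b31 b32 b33 =
  m3 (a11+b11) (a12+b12) (a13+b13) (a21+b21) (a22+b22) (a23+b23) (a31+b31) (a32+b32) (a33+b33)"
  by (simp add: vec_eq_iff forall_3)

lemma m3_diff [simp]: "m3 a11 a12 a13 a21 a22 a23 a31 a32 a33 - m3 b11 b12 b13 b21 b22 b23 b31 b32 b33 =
  m3 (a11-b11) (a12-b12) (a13-b13) (a21-b21) (a22-b22) (a23-b23) (a31-b31) (a32-b32) (a33-b33)"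
  by (simp add: vec_eq_iff forall_3)

lemma m3_uminus [simp]: "- m3 a11 a12 a13 a21 a22 a23 a31 a32 a33 =
  m3 (-a11) (-a12) (-a13) (-a21) (-a22) (-a23) (-a31) (-a32) (-a33)"
  by (simp add: vec_eq_iff forall_3)

lemma m3_scaleR [simp]: "c *\<^sub>R m3 a11 a12 a13 a21 a22 a23 a31 a32 a33 =
  m3 (c*a11) (c*a12) (c*a13) (c*a21) (c*a22) (c*a23) (c*a31) (c*a32) (c*a33)"
  by (simp add: vec_eq_iff forall_3)

lemma m3_transpose [simp]: "transpose (m3 a11 a12 a13 a21 a22 a23 a31 a32 a33) =
  m3 a11 a21 a31 a12 a22 a32 a13 a23 a33"
  by (simp add: vec_eq_iff forall_3 transpose_def)

lemma m3_trace [simp]: "trace (m3 a11 a12 a13 a21 a22 a23 a31 a32 a33) = a11 + a22 + a33"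
  by (simp add: trace_def sum_3)

lemma m3_det: "det (m3 a11 a12 a13 a21 a22 a23 a31 a32 a33) =
   a11*a22*a33 + a12*a23*a31 + a13*a21*a32 - a11*a23*a32 - a12*a21*a33 - a13*a22*a31"
  by (simp add: det_3)

lemma m3_one: "(mat 1 :: mat3) = m3 1 0 0 0 1 0 0 0 1"
  by (simp add: vec_eq_iff forall_3 mat_def)

lemma m3_zero: "(0 :: mat3) = m3 0 0 0 0 0 0 0 0 0"
  by (simp add: vec_eq_iff forall_3)

lemma m3_mulv [simp]: "m3 a11 a12 a13 a21 a22 a23 a31 a32 a33 *v vector [x1, x2, x3] =
   vector [a11*x1 + a12*x2 + a13*x3, a21*x1 + a22*x2 + a23*x3, a31*x1 + a32*x2 + a33*x3]"
  by (simp add: vec_eq_iff forall_3 matrix_vector_mult_def sum_3)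

lemma symmetric_m3:
  assumes "transpose D = D"
  obtains d11 d12 d13 d22 d23 d33 where "D = m3 d11 d12 d13 d12 d22 d23 d13 d23 d33"
proof -
  obtain d11 d12 d13 d21 d22 d23 d31 d32 d33 where D: "D = m3 d11 d12 d13 d21 d22 d23 d31 d32 d33"
    using m3_eta by blast
  have "d21 = d12" "d31 = d13" "d32 = d23"
    using arg_cong[OF assms, of "\<lambda>M. M$1$2"] arg_cong[OF assms, of "\<lambda>M. M$1$3"]
      arg_cong[OF assms, of "\<lambda>M. M$2$3"]
    unfolding D by simp_all
  then show thesis using that D by blast
qed

lemma inner_m3_mulv: "vector [x1, x2, x3] \<bullet> (m3 a11 a12 a13 a21 a22 a23 a31 a32 a33 *v vector [x1, x2, x3]) =
   x1*(a11*x1 + a12*x2 + a13*x3) + x2*(a21*x1 + a22*x2 + a23*x3) + x3*(a31*x1 + a32*x2 + a33*x3)"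
  by (simp add: inner_vec_def sum_3)

lemma vector3_nonzero_iff: "(vector [x1, x2, x3] :: real^3) \<noteq> 0 \<longleftrightarrow> x1 \<noteq> 0 \<or> x2 \<noteq> 0 \<or> x3 \<noteq> 0"
  by (simp add: vec_eq_iff forall_3)

section \<open>The Lie algebra of R^x Aut(r_3)\<close>

lemma r3_bracket_vector [simp]: "r3_bracket (vector [x1, x2, x3]) (vector [y1, y2, y3]) =
   vector [0, x1*y2 - x2*y1, (x1*y2 - x2*y1) + (x1*y3 - x3*y1)]"
  by (simp add: r3_bracket_def Let_def)

lemma r3_aut_iff: "r3_aut \<phi> \<longleftrightarrow> (\<exists>p q \<alpha> \<beta>. \<alpha> \<noteq> 0 \<and> \<phi> = m3 1 0 0 p \<alpha> 0 q \<beta> \<alpha>)"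
proof
  assume aut: "r3_aut \<phi>"
  obtain m11 m12 m13 m21 m22 m23 m31 m32 m33 where M: "\<phi> = m3 m11 m12 m13 m21 m22 m23 m31 m32 m33"
    using m3_eta by blast
  have br: "\<phi> *v r3_bracket x y = r3_bracket (\<phi> *v x) (\<phi> *v y)" for x y
    using aut unfolding r3_aut_def by blast
  have "det \<phi> \<noteq> 0" using aut invertible_det_nz unfolding r3_aut_def by blast
  have e13: "\<phi> *v r3_bracket (vector [1,0,0]) (vector [0,0,1])
      = r3_bracket (\<phi> *v vector [1,0,0]) (\<phi> *v vector [0,0,1])"
    and e12: "\<phi> *v r3_bracket (vector [1,0,0]) (vector [0,1,0])
      = r3_bracket (\<phi> *v vector [1,0,0]) (\<phi> *v vector [0,1,0])"
    by (rule br)+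
  have m13: "m13 = 0" using arg_cong[OF e13, of "\<lambda>v. v$1"] unfolding M by simp
  have m12: "m12 = 0" using arg_cong[OF e12, of "\<lambda>v. v$1"] unfolding M m13 by simp
  have c2: "m23 = m11*m23" using arg_cong[OF e13, of "\<lambda>v. v$2"] unfolding M m13 by simp
  have c3: "m33 = m11*m23 + m11*m33" using arg_cong[OF e13, of "\<lambda>v. v$3"] unfolding M m13 by simp
  have c6: "m32 + m33 = m11*m22 + m11*m32"
    using arg_cong[OF e12, of "\<lambda>v. v$3"] unfolding M m13 m12 by simp
  have det: "m11 * (m22*m33 - m23*m32) \<noteq> 0"
    using \<open>det \<phi> \<noteq> 0\<close> unfolding M m3_det m12 m13 by (simp add: algebra_simps)
  have "m23 = 0"
  proof (rule ccontr)
    assume "m23 \<noteq> 0"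
    then have "m11 = 1" using c2 by simp
    then show False using c3 \<open>m23 \<noteq> 0\<close> by simp
  qed
  then have "m33 \<noteq> 0" "m11 = 1" using det c3 by auto
  then have "m22 = m33" using c6 by simp
  then show "\<exists>p q \<alpha> \<beta>. \<alpha> \<noteq> 0 \<and> \<phi> = m3 1 0 0 p \<alpha> 0 q \<beta> \<alpha>"
    unfolding M using m12 m13 \<open>m23 = 0\<close> \<open>m11 = 1\<close> \<open>m33 \<noteq> 0\<close>
    by (intro exI[of _ m21] exI[of _ m31] exI[of _ m33] exI[of _ m32]) simp
next
  assume "\<exists>p q \<alpha> \<beta>. \<alpha> \<noteq> 0 \<and> \<phi> = m3 1 0 0 p \<alpha> 0 q \<beta> \<alpha>"
  then obtain p q \<alpha> \<beta> where "\<alpha> \<noteq> 0" and \<phi>: "\<phi> = m3 1 0 0 p \<alpha> 0 q \<beta> \<alpha>" by blast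
  have "invertible \<phi>" unfolding invertible_det_nz \<phi> m3_det using \<open>\<alpha> \<noteq> 0\<close> by simp
  moreover have "\<forall>x y. \<phi> *v r3_bracket x y = r3_bracket (\<phi> *v x) (\<phi> *v y)"
    unfolding \<phi> forall_vector_3 by (simp add: algebra_simps)
  ultimately show "r3_aut \<phi>" unfolding r3_aut_def by blast
qed

text \<open>The paper's R + Der(r_3): multiples of the identity plus the derivations of r_3.\<close>
definition RxDer :: "mat3 set" where
  "RxDer = {M. M$1$2 = 0 \<and> M$1$3 = 0 \<and> M$2$3 = 0 \<and> M$2$2 = M$3$3}"

lemma RxDer_m3: "X \<in> RxDer \<Longrightarrow> X = m3 (X$1$1) 0 0 (X$2$1) (X$3$3) 0 (X$3$1) (X$3$2) (X$3$3)"
  unfolding RxDer_def by (simp add: vec_eq_iff forall_3)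

lemma m3_in_RxDer [simp]: "m3 x11 0 0 x21 x22 0 x31 x32 x22 \<in> RxDer"
  unfolding RxDer_def by simp

lemma subspace_RxDer: "subspace RxDer"
  unfolding subspace_def RxDer_def by simp

lemma RxAut_subset_RxDer: "RxAut \<subseteq> RxDer"
  unfolding RxAut_def by (auto simp: r3_aut_iff)

lemma bounded_linear_vanishing_along_curve:
  fixes L :: "'a::real_normed_vector \<Rightarrow> real"
  assumes "bounded_linear L" "\<And>t. L (\<gamma> t) = 0" "(\<gamma> has_vector_derivative X) (at 0)"
  shows "L X = 0"
proof -
  have "((\<lambda>t. L (\<gamma> t)) has_vector_derivative L X) (at 0)"
    by (rule bounded_linear.has_vector_derivative[OF assms(1,3)])
  then have "((\<lambda>t. 0) has_vector_derivative L X) (at 0)" using assms(2) by simp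
  then show ?thesis using has_vector_derivative_const vector_derivative_unique_at by blast
qed

lemma lie_alg_RxAut_subset: "lie_alg RxAut \<subseteq> RxDer"
proof
  fix X assume "X \<in> lie_alg RxAut"
  then obtain \<gamma> where \<gamma>: "\<And>t. \<gamma> t \<in> RxDer" "(\<gamma> has_vector_derivative X) (at 0)"
    using RxAut_subset_RxDer unfolding lie_alg_def by blast
  have entry: "bounded_linear (\<lambda>M::mat3. M $ i $ j)" for i j
    by (simp add: bounded_linear_compose[OF bounded_linear_vec_nth bounded_linear_vec_nth])
  have "bounded_linear (\<lambda>M::mat3. M$2$2 - M$3$3)"
    by (intro bounded_linear_sub entry)
  then show "X \<in> RxDer"
    using \<gamma> bounded_linear_vanishing_along_curve[OF entry _ \<gamma>(2)]
      bounded_linear_vanishing_along_curve[OF _ _ \<gamma>(2), of "\<lambda>M. M$2$2 - M$3$3"]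
    unfolding RxDer_def by auto
qed

lemma RxDer_subset_lie_alg_RxAut: "RxDer \<subseteq> lie_alg RxAut"
proof
  fix X assume "X \<in> RxDer"
  then obtain x11 x21 x22 x31 x32 where X: "X = m3 x11 0 0 x21 x22 0 x31 x32 x22"
    using RxDer_m3 by blast
  define \<gamma> where "\<gamma> t = exp (t*x11) *\<^sub>R m3 1 0 0 0 0 0 0 0 0 + exp (t*x22) *\<^sub>R m3 0 0 0 0 1 0 0 0 1
      + t *\<^sub>R m3 0 0 0 x21 0 0 x31 x32 0" for t
  have "\<gamma> t \<in> RxAut" for t
  proof -
    define c where "c = exp (t*x11)"
    have "c \<noteq> 0" unfolding c_def by simp
    then have "\<gamma> t = c *\<^sub>R m3 1 0 0 (t*x21/c) (exp (t*x22)/c) 0 (t*x31/c) (t*x32/c) (exp (t*x22)/c)"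
      unfolding \<gamma>_def c_def[symmetric] by simp
    moreover have "r3_aut (m3 1 0 0 (t*x21/c) (exp (t*x22)/c) 0 (t*x31/c) (t*x32/c) (exp (t*x22)/c))"
      unfolding r3_aut_iff using \<open>c \<noteq> 0\<close> by simp
    ultimately show ?thesis
      unfolding RxAut_def using \<open>c \<noteq> 0\<close> by blast
  qed
  moreover have "\<gamma> 0 = mat 1" unfolding \<gamma>_def m3_one by simp
  moreover have "(\<gamma> has_vector_derivative X) (at 0)"
  proof -
    have "((\<lambda>t. exp (t*x)) has_real_derivative x) (at 0)" for x :: real
      by (auto intro!: derivative_eq_intros)
    note scale = has_vector_derivative_scaleR[OF this has_vector_derivative_const]
    have "(\<gamma> has_vector_derivative (exp (0*x11) *\<^sub>R 0 + x11 *\<^sub>R m3 1 0 0 0 0 0 0 0 0)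
        + (exp (0*x22) *\<^sub>R 0 + x22 *\<^sub>R m3 0 0 0 0 1 0 0 0 1)
        + (0 *\<^sub>R 0 + 1 *\<^sub>R m3 0 0 0 x21 0 0 x31 x32 0)) (at 0)"
      unfolding \<gamma>_def
      by (intro has_vector_derivative_add scale
          has_vector_derivative_scaleR[OF DERIV_ident has_vector_derivative_const])
    then show ?thesis unfolding X by simp
  qed
  ultimately show "X \<in> lie_alg RxAut" unfolding lie_alg_def by blast
qed

lemma lie_alg_RxAut: "lie_alg RxAut = RxDer"
  using lie_alg_RxAut_subset RxDer_subset_lie_alg_RxAut by blast

lemma orbit_tangent_RxAut: "orbit_tangent RxAut Q = (\<lambda>X. fund X Q) ` RxDer"
  unfolding orbit_tangent_def lie_alg_RxAut by blast

lemma subspace_orbit_tangent_RxAut: "subspace (orbit_tangent RxAut Q)"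
  unfolding orbit_tangent_RxAut by (rule linear_subspace_image[OF linear_fund_left subspace_RxDer])

lemma orbit_tangent_RxAut_symmetric: "transpose Q = Q \<Longrightarrow> orbit_tangent RxAut Q \<subseteq> sym_mats"
  unfolding orbit_tangent_RxAut sym_mats_def using fund_symmetric by blast

section \<open>The orbit through a diagonal inner product\<close>

abbreviation diag3 :: "real \<Rightarrow> real \<Rightarrow> real \<Rightarrow> mat3" where
  "diag3 a b e \<equiv> m3 a 0 0 0 b 0 0 0 e"

lemma matrix_inv_diag3:
  assumes "a \<noteq> 0" "b \<noteq> 0" "e \<noteq> 0"
  shows "matrix_inv (diag3 a b e) = diag3 (1/a) (1/b) (1/e)"
  using assms by (intro matrix_inv_unique) (simp add: m3_one)

lemma invertible_diag3: "a \<noteq> 0 \<Longrightarrow> b \<noteq> 0 \<Longrightarrow> e \<noteq> 0 \<Longrightarrow> invertible (diag3 a b e)"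
  by (simp add: invertible_det_nz m3_det)

lemma metric_definite_diag3:
  assumes a: "a > 0" and b: "b > 0" and e: "e > 0"
  shows "metric_definite (diag3 a b e)"
  unfolding metric_definite_def
proof (intro ballI impI)
  fix D assume "D \<in> sym_mats" and D0: "metric (diag3 a b e) D D = 0"
  obtain d11 d12 d13 d22 d23 d33 where D: "D = m3 d11 d12 d13 d12 d22 d23 d13 d23 d33"
    using \<open>D \<in> sym_mats\<close> symmetric_m3 unfolding sym_mats_def by blast
  have "metric (diag3 a b e) D D = (1/4) * (d11*d11/(a*a) + 2*(d12*d12)/(a*b) + 2*(d13*d13)/(a*e)
      + d22*d22/(b*b) + 2*(d23*d23)/(b*e) + d33*d33/(e*e))"
    unfolding metric_def D using a b e by (simp add: matrix_inv_diag3)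
  then have "d11*d11/(a*a) + 2*(d12*d12)/(a*b) + 2*(d13*d13)/(a*e)
      + d22*d22/(b*b) + 2*(d23*d23)/(b*e) + d33*d33/(e*e) = 0"
    using D0 by simp
  moreover have "0 \<le> d11*d11/(a*a)" "0 \<le> 2*(d12*d12)/(a*b)" "0 \<le> 2*(d13*d13)/(a*e)"
    "0 \<le> d22*d22/(b*b)" "0 \<le> 2*(d23*d23)/(b*e)" "0 \<le> d33*d33/(e*e)"
    using a b e by simp_all
  ultimately have "d11*d11/(a*a) = 0" "2*(d12*d12)/(a*b) = 0" "2*(d13*d13)/(a*e) = 0"
    "d22*d22/(b*b) = 0" "2*(d23*d23)/(b*e) = 0" "d33*d33/(e*e) = 0"
    by linarith+
  then show "D = 0" unfolding D m3_zero using a b e by simp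
qed

definition diag3_frame :: "real \<Rightarrow> real \<Rightarrow> real \<Rightarrow> mat3 list" where
  "diag3_frame a b e = [m3 1 0 0 0 0 0 0 0 0, m3 0 0 0 0 (sqrt (1/2)) 0 0 0 (sqrt (1/2)),
     m3 0 0 0 (sqrt (2*a/b)) 0 0 0 0 0, m3 0 0 0 0 0 0 (sqrt (2*a/e)) 0 0,
     m3 0 0 0 0 0 0 0 (sqrt (2*b/e)) 0]"

lemma set_diag3_frame: "set (diag3_frame a b e) \<subseteq> RxDer"
  unfolding diag3_frame_def by simp

lemma span_diag3_frame:
  assumes "a > 0" "b > 0" "e > 0"
  shows "span (set (diag3_frame a b e)) = RxDer"
proof
  show "span (set (diag3_frame a b e)) \<subseteq> RxDer"
    by (intro span_minimal set_diag3_frame subspace_RxDer)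
  show "RxDer \<subseteq> span (set (diag3_frame a b e))"
  proof
    fix X assume "X \<in> RxDer"
    then obtain x11 x21 x22 x31 x32 where X: "X = m3 x11 0 0 x21 x22 0 x31 x32 x22"
      using RxDer_m3 by blast
    define s2 s3 s4 s5 where "s2 = sqrt (1/2)" and "s3 = sqrt (2*a/b)" and "s4 = sqrt (2*a/e)"
      and "s5 = sqrt (2*b/e)"
    have "s2 \<noteq> 0" "s3 \<noteq> 0" "s4 \<noteq> 0" "s5 \<noteq> 0"
      using assms unfolding s2_def s3_def s4_def s5_def by simp_all
    then have "X = x11 *\<^sub>R m3 1 0 0 0 0 0 0 0 0 + (x22/s2) *\<^sub>R m3 0 0 0 0 s2 0 0 0 s2
        + (x21/s3) *\<^sub>R m3 0 0 0 s3 0 0 0 0 0 + (x31/s4) *\<^sub>R m3 0 0 0 0 0 0 s4 0 0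
        + (x32/s5) *\<^sub>R m3 0 0 0 0 0 0 0 s5 0"
      unfolding X by simp
    then show "X \<in> span (set (diag3_frame a b e))"
      unfolding diag3_frame_def s2_def s3_def s4_def s5_def
      by (simp only:) (intro span_add span_mul span_base, simp_all)
  qed
qed

lemma orthonormal_diag3_frame:
  assumes a: "a > 0" and b: "b > 0" and e: "e > 0"
  shows "\<forall>i<length (diag3_frame a b e). \<forall>j<length (diag3_frame a b e).
    metric (diag3 a b e) (fund (diag3_frame a b e ! i) (diag3 a b e)) (fund (diag3_frame a b e ! j) (diag3 a b e))
      = (if i = j then 1 else 0)"
proof (intro allI impI)
  fix i j assume "i < length (diag3_frame a b e)" "j < length (diag3_frame a b e)"
  then have "i \<in> {0,1,2,3,4}" "j \<in> {0,1,2,3,4}" by (auto simp: diag3_frame_def)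
  then show "metric (diag3 a b e) (fund (diag3_frame a b e ! i) (diag3 a b e))
      (fund (diag3_frame a b e ! j) (diag3 a b e)) = (if i = j then 1 else 0)"
    unfolding diag3_frame_def metric_def fund_def
    using a b e by (auto simp: matrix_inv_diag3)
qed

lemma mean_curvature_sum_diag3:
  assumes a: "a > 0" and b: "b > 0" and e: "e > 0"
  shows "(\<Sum>X\<leftarrow>diag3_frame a b e. cov_deriv (fund X) (diag3 a b e) (fund X (diag3 a b e)))
    = diag3 (4*a) 0 (-4*e)"
proof -
  have "invertible (diag3 a b e)" "transpose (diag3 a b e) = diag3 a b e"
    using a b e by (simp_all add: invertible_diag3)
  note cov = cov_deriv_fund_self[OF this metric_definite_diag3[OF a b e]]
  show ?thesis
    unfolding cov diag3_frame_def using a b e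
    by (simp add: matrix_inv_diag3 fund_def algebra_simps)
qed

lemma normal_proj_diag3:
  assumes a: "a > 0" and b: "b > 0" and e: "e > 0"
  shows "normal_proj (diag3 a b e) (orbit_tangent RxAut (diag3 a b e)) (diag3 (4*a) 0 (-4*e))
    = diag3 0 (2*b) (-2*e)"
proof (rule normal_proj_eqI[OF metric_definite_diag3[OF a b e] subspace_orbit_tangent_RxAut
      orbit_tangent_RxAut_symmetric])
  have "diag3 (4*a) 0 (-4*e) - diag3 0 (2*b) (-2*e) = fund (m3 (-2) 0 0 0 1 0 0 0 1) (diag3 a b e)"
    unfolding fund_def by simp
  then show "diag3 (4*a) 0 (-4*e) - diag3 0 (2*b) (-2*e) \<in> orbit_tangent RxAut (diag3 a b e)"
    unfolding orbit_tangent_RxAut by (metis image_eqI m3_in_RxDer)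
next
  fix v assume "v \<in> orbit_tangent RxAut (diag3 a b e)"
  then obtain X where v: "v = fund X (diag3 a b e)" and "X \<in> RxDer"
    unfolding orbit_tangent_RxAut by blast
  then obtain x11 x21 x22 x31 x32 where X: "X = m3 x11 0 0 x21 x22 0 x31 x32 x22"
    using RxDer_m3 by blast
  show "metric (diag3 a b e) (diag3 0 (2*b) (-2*e)) v = 0"
    unfolding v X metric_def fund_def using a b e by (simp add: matrix_inv_diag3)
qed (simp)

lemma not_mean_curv_zero_diag3:
  assumes a: "a > 0" and b: "b > 0" and e: "e > 0"
  shows "\<not> mean_curv_zero RxAut (diag3 a b e)"
proof
  assume mc: "mean_curv_zero RxAut (diag3 a b e)"
  have "span (set (map (\<lambda>X. fund X (diag3 a b e)) (diag3_frame a b e)))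
      = orbit_tangent RxAut (diag3 a b e)"
    unfolding set_map linear_span_image[OF linear_fund_left] span_diag3_frame[OF a b e]
      orbit_tangent_RxAut ..
  then have "normal_proj (diag3 a b e) (orbit_tangent RxAut (diag3 a b e))
      (\<Sum>X\<leftarrow>diag3_frame a b e. cov_deriv (fund X) (diag3 a b e) (fund X (diag3 a b e))) = 0"
    using mc set_diag3_frame orthonormal_diag3_frame[OF a b e]
    unfolding mean_curv_zero_def lie_alg_RxAut by blast
  then show False
    unfolding mean_curvature_sum_diag3[OF a b e] normal_proj_diag3[OF a b e] using b
    by (simp add: m3_zero)
qed

section \<open>Every orbit meets the diagonal inner products\<close>

lemma RxAut_diagonalizes_posdef:
  assumes "posdef P"
  obtains g a b e where "g \<in> RxAut" "act g P = diag3 a b e" "a > 0" "b > 0" "e > 0"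
proof -
  have pos: "x \<bullet> (P *v x) > 0" if "x \<noteq> 0" for x
    using assms that unfolding posdef_def by blast
  obtain p11 p12 p13 p22 p23 p33 where P: "P = m3 p11 p12 p13 p12 p22 p23 p13 p23 p33"
    using assms symmetric_m3 unfolding posdef_def by metis
  have "p33 > 0" using pos[of "vector [0,0,1]"] unfolding P inner_m3_mulv vector3_nonzero_iff by simp
  define \<Delta> where "\<Delta> = p22*p33 - p23*p23"
  have "0 < vector [0, p33, -p23] \<bullet> (P *v vector [0, p33, -p23])"
    using \<open>p33 > 0\<close> by (intro pos) (simp add: vector3_nonzero_iff)
  also have "\<dots> = p33 * \<Delta>" unfolding P inner_m3_mulv \<Delta>_def by (simp add: algebra_simps)
  finally have "\<Delta> > 0" using \<open>p33 > 0\<close> by (simp add: zero_less_mult_iff)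
  \<comment> \<open>act g P is the congruence of P by the unipotent lower triangular matrix h of the LDL
      decomposition of P, and unipotent lower triangular matrices are automorphisms of r_3.\<close>
  define w where "w = - p23 / p33"
  define u where "u = (p13*p23 - p12*p33) / \<Delta>"
  define v where "v = (p12*p23 - p13*p22) / \<Delta>"
  define h where "h = m3 1 0 0 u 1 0 v w 1"
  define g where "g = m3 1 0 0 (-u) 1 0 (u*w - v) (-w) 1"
  have h: "matrix_inv g = h" unfolding g_def h_def
    by (rule matrix_inv_unique) (simp add: m3_one)
  define A where "A = p11 + u * p12 + v * p13"
  have act: "act g P = diag3 A (\<Delta>/p33) p33"
    unfolding act_def h unfolding h_def P A_def u_def v_def w_def \<Delta>_def
    using \<open>p33 > 0\<close> \<open>\<Delta> > 0\<close>[unfolded \<Delta>_def] by (simp add: field_simps)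
  have "0 < vector [1, u, v] \<bullet> (P *v vector [1, u, v])" by (intro pos) (simp add: vector3_nonzero_iff)
  also have "\<dots> = act g P $ 1 $ 1" unfolding act_def h h_def P inner_m3_mulv by (simp add: algebra_simps)
  finally have "A > 0" unfolding act by simp
  have "r3_aut g" unfolding r3_aut_iff g_def
    by (intro exI[of _ "-u"] exI[of _ "u*w - v"] exI[of _ 1] exI[of _ "-w"]) simp
  then have "g \<in> RxAut" unfolding RxAut_def by (intro CollectI exI[of _ 1] exI[of _ g]) simp
  then show thesis using that act \<open>A > 0\<close> \<open>\<Delta> > 0\<close> \<open>p33 > 0\<close> by simp
qed

theorem proposition5p2:
  shows "\<forall>P. posdef P \<longrightarrow> \<not> minimal_orbit RxAut P"
proof (intro allI impI)
  fix P assume "posdef P"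
  then obtain g a b e where g: "g \<in> RxAut" "act g P = diag3 a b e" "a > 0" "b > 0" "e > 0"
    by (rule RxAut_diagonalizes_posdef)
  then have "diag3 a b e \<in> orbit RxAut P" unfolding orbit_def by force
  then show "\<not> minimal_orbit RxAut P"
    using not_mean_curv_zero_diag3[OF g(3-5)] unfolding minimal_orbit_def by blast
qed

end
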